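(* Let $f:[0,T]\times\mathbb R^n\times\mathbb D[0,T]\times\mathbb R\times\mathbb R^{1\times d}\times\mathbb L^2(E,\nu)\to\mathbb R$ and $\xi:\mathbb R^n\to\mathbb R$ satisfy Assumptions (MS) and (ML) below. For $m\in\mathbb N$ define $$f_m\bigl(r,x,(q_v)_{v\in[r,T]},y,z,\psi\bigr):=f\bigl(r,x,(\varphi_m(q_v))_{v\in[r,T]},\varphi_m(y),\varphi_m(z),\varphi_m(\psi\circ\zeta_m)\bigr),$$ where $\varphi_m(x)=(-m)\vee(x\wedge m)$ is applied componentwise to $z$ and $\psi$, and $(\psi\circ\zeta_m)(e):=\psi(e)\mathbf 1_{|e|\ge1/m}$ (componentwise). Then $(f_m)_{m\in\mathbb N}$ (together with $\xi$) satisfy Assumptions (MS) and (ML) uniformly in $m\in\mathbb N$. Moreover, for each $m$, $f_m$ is a.e. bounded and globally Lipschitz in $(q,y,z,\psi)$: there is $L_m>0$ with $$|f_m(t,x,(q_v)_{v\in[t,T]},y,z,\psi)-f_m(t,x,(q'_v)_{v\in[t,T]},y',z',\psi')|\le L_m\Bigl(\sup_{v\in[t,T]}|q_v-q'_v|+|y-y'|+|z-z'|+\|\psi-\psi'\|_{\mathbb L^2(\nu)}\Bigr)$$ for all arguments, for a.e. $t$.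
   Context: Setting: $T>0$, $d,k,n\in\mathbb N$. $k$ $\sigma$-finite measures $\nu^1,\dots,\nu^k$ on $\mathbb R_0=\mathbb R\setminus\{0\}$ with $\int|e|^2\nu^i(de)<\infty$ (compensators $\nu^i(de)dt$ of independent Poisson random measures $\mu^i$ on the filtered probability space generated by them and a $d$-dimensional Brownian motion, with completed canonical filtration $\mathbb F$). $E=\mathbb R_0^k$; $\mathbb L^2(E,\nu)$ = $\psi=(\psi^i)_{i\le k}$, $\psi^i:\mathbb R_0\to\mathbb R$ Borel, with $\|\psi\|^2_{\mathbb L^2(\nu)}=\sum_i\int|\psi^i|^2d\nu^i<\infty$, and $\int_E g(\psi(e))\nu(de):=\sum_i\int g(\psi^i(e))\nu^i(de)$; $\|\psi\|_{\mathbb L^\infty(\nu)}$ the $\nu$-essential sup. $\mathbb D[0,T]$ real càdlàg functions. $\mathbb E_{\mathcal F_t}$ conditional expectation. $j_\gamma(u)=\frac1\gamma(e^{\gamma u}-1-\gamma u)$. Assumption (MS): (i) for every $(x,y,z,\psi)$ and every càdlàg adapted $(Y_v)$, $t\mapsto\mathbb E_{\mathcal F_t}f(t,x,(Y_v)_{v\in[t,T]},y,z,\psi)$ is progressively measurable; (ii) there are constants $\beta,\delta\ge0,\gamma>0$ and a positive non-random function $l$ on $[0,T]$ such that for every $(x,q,y,z,\psi)$, for $dt$-a.e. $t$, $-l_t-\delta\sup_{v\in[t,T]}|q_v|-\beta|y|-\frac\gamma2|z|^2-\int_Ej_\gamma(-\psi(e))\nu(de)\le f(t,x,(q_v)_{v\in[t,T]},y,z,\psi)\le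 l_t+\delta\sup_{v\in[t,T]}|q_v|+\beta|y|+\frac\gamma2|z|^2+\int_Ej_\gamma(\psi(e))\nu(de)$; (iii) $\sup_x|\xi(x)|<\infty$, $\sup_tl_t<\infty$. Assumption (ML): for each $M>0$ there is $K_M>0$, and constants $K_\xi\ge0,\rho\ge0,\alpha\in(0,1]$, such that for all arguments with $|y|,|y'|,\|\psi\|_{\mathbb L^\infty(\nu)},\|\psi'\|_{\mathbb L^\infty(\nu)},\sup_v|q_v|,\sup_v|q'_v|\le M$, for $dt$-a.e. $t$: $|f(t,x,(q_v),y,z,\psi)-f(t,x,(q'_v),y',z',\psi')|\le K_M(\sup_{v\in[t,T]}|q_v-q'_v|+|y-y'|+\|\psi-\psi'\|_{\mathbb L^2(\nu)})+K_M(1+|z|+|z'|+\|\psi\|_{\mathbb L^2(\nu)}+\|\psi'\|_{\mathbb L^2(\nu)})|z-z'|$; $|f(t,x,(q_v),y,z,\psi)-f(t,x',(q_v),y,z,\psi)|\le K_M(1+[|x|\vee|x'|]^\rho+|z|^2+\|\psi\|^2_{\mathbb L^2(\nu)})|x-x'|^\alpha$; $|\xi(x)-\xi(x')|\le K_\xi|x-x'|^\alpha$. *)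

theory Defs
  imports "HOL-Probability.Probability"
begin

definition phi :: "nat \<Rightarrow> real \<Rightarrow> real" where
  "phi m u = max (- real m) (min u (real m))"

definition phiv :: "nat \<Rightarrow> real^'d \<Rightarrow> real^'d" where
  "phiv m z = (\<chi> i. phi m (z $ i))"

definition zeta_trunc :: "nat \<Rightarrow> ('k \<Rightarrow> real \<Rightarrow> real) \<Rightarrow> ('k \<Rightarrow> real \<Rightarrow> real)" where
  "zeta_trunc m \<psi> = (\<lambda>i e. if \<bar>e\<bar> \<ge> 1 / real m then \<psi> i e else 0)"

definition fm ::
  "(real \<Rightarrow> real^'n \<Rightarrow> (real \<Rightarrow> real) \<Rightarrow> real \<Rightarrow> real^'d \<Rightarrow> ('k \<Rightarrow> real \<Rightarrow> real) \<Rightarrow> real)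
   \<Rightarrow> nat \<Rightarrow> (real \<Rightarrow> real^'n \<Rightarrow> (real \<Rightarrow> real) \<Rightarrow> real \<Rightarrow> real^'d \<Rightarrow> ('k \<Rightarrow> real \<Rightarrow> real) \<Rightarrow> real)"
  where
  "fm f m = (\<lambda>r x q y z \<psi>. f r x (\<lambda>v. phi m (q v)) (phi m y) (phiv m z)
                              (\<lambda>i e. phi m (zeta_trunc m \<psi> i e)))"

definition jg :: "real \<Rightarrow> real \<Rightarrow> real" where
  "jg \<gamma> u = (exp (\<gamma> * u) - 1 - \<gamma> * u) / \<gamma>"

text \<open>Standing assumptions on the compensator measures nu^i on R_0 (identified with
  Borel measures on R not charging 0).\<close>
definition levy_measures :: "('k \<Rightarrow> real measure) \<Rightarrow> bool" where
  "levy_measures \<nu> \<longleftrightarrow> (\<forall>i. sets (\<nu> i) = sets borel \<and> sigma_finite_measure (\<nu> i)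
      \<and> emeasure (\<nu> i) {0} = 0 \<and> (\<integral>\<^sup>+ e. ennreal (e\<^sup>2) \<partial>\<nu> i) < \<infinity>)"

definition L2nu :: "('k \<Rightarrow> real measure) \<Rightarrow> ('k \<Rightarrow> real \<Rightarrow> real) set" where
  "L2nu \<nu> = {\<psi>. \<forall>i. \<psi> i \<in> borel_measurable (\<nu> i) \<and> (\<integral>\<^sup>+ e. ennreal ((\<psi> i e)\<^sup>2) \<partial>\<nu> i) < \<infinity>}"

definition L2norm :: "('k::finite \<Rightarrow> real measure) \<Rightarrow> ('k \<Rightarrow> real \<Rightarrow> real) \<Rightarrow> real" where
  "L2norm \<nu> \<psi> = sqrt (\<Sum>i\<in>UNIV. \<integral> e. (\<psi> i e)\<^sup>2 \<partial>\<nu> i)"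

definition Linfnorm :: "('k \<Rightarrow> real measure) \<Rightarrow> ('k \<Rightarrow> real \<Rightarrow> real) \<Rightarrow> ereal" where
  "Linfnorm \<nu> \<psi> = (SUP i. esssup (\<nu> i) (\<lambda>e. ereal \<bar>\<psi> i e\<bar>))"

definition Jint :: "real \<Rightarrow> ('k::finite \<Rightarrow> real measure) \<Rightarrow> ('k \<Rightarrow> real \<Rightarrow> real) \<Rightarrow> ereal" where
  "Jint \<gamma> \<nu> \<psi> = (\<Sum>i\<in>UNIV. enn2ereal (\<integral>\<^sup>+ e. ennreal (jg \<gamma> (\<psi> i e)) \<partial>\<nu> i))"

definition supq :: "real \<Rightarrow> real \<Rightarrow> (real \<Rightarrow> real) \<Rightarrow> real" where
  "supq t T q = Sup ((\<lambda>v. \<bar>q v\<bar>) ` {t..T})"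

definition cadlag_on :: "real \<Rightarrow> (real \<Rightarrow> real) \<Rightarrow> bool" where
  "cadlag_on T q \<longleftrightarrow> (\<forall>t\<in>{0..<T}. (q \<longlongrightarrow> q t) (at_right t))
                     \<and> (\<forall>t\<in>{0<..T}. \<exists>L. (q \<longlongrightarrow> L) (at_left t))"

definition filtered_space :: "'w measure \<Rightarrow> (real \<Rightarrow> 'w measure) \<Rightarrow> bool" where
  "filtered_space M F \<longleftrightarrow> prob_space M \<and> (\<forall>t. subalgebra M (F t))
      \<and> (\<forall>s t. s \<le> t \<longrightarrow> sets (F s) \<subseteq> sets (F t))"

definition progressive :: "(real \<Rightarrow> 'w measure) \<Rightarrow> real \<Rightarrow> (real \<Rightarrow> 'w \<Rightarrow> real) \<Rightarrow> bool" where
  "progressive F T X \<longleftrightarrow> (\<forall>t\<in>{0..T}.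
      (\<lambda>(s, \<omega>). X s \<omega>) \<in> borel_measurable (restrict_space borel {0..t} \<Otimes>\<^sub>M F t))"

definition cadlag_adapted :: "'w measure \<Rightarrow> (real \<Rightarrow> 'w measure) \<Rightarrow> real \<Rightarrow> (real \<Rightarrow> 'w \<Rightarrow> real) \<Rightarrow> bool" where
  "cadlag_adapted M F T Y \<longleftrightarrow> (\<forall>t\<in>{0..T}. Y t \<in> borel_measurable (F t))
      \<and> (\<forall>\<omega>\<in>space M. cadlag_on T (\<lambda>v. Y v \<omega>))"

type_synonym ('n, 'd, 'k) driver =
  "real \<Rightarrow> real^'n \<Rightarrow> (real \<Rightarrow> real) \<Rightarrow> real \<Rightarrow> real^'d \<Rightarrow> ('k \<Rightarrow> real \<Rightarrow> real) \<Rightarrow> real"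

definition MS_meas :: "('k \<Rightarrow> real measure) \<Rightarrow> 'w measure \<Rightarrow> (real \<Rightarrow> 'w measure) \<Rightarrow> real
    \<Rightarrow> ('n::finite, 'd::finite, 'k) driver \<Rightarrow> bool" where
  "MS_meas \<nu> M F T f \<longleftrightarrow> (\<forall>x y z \<psi> Y. \<psi> \<in> L2nu \<nu> \<longrightarrow> cadlag_adapted M F T Y \<longrightarrow>
      (\<exists>X. progressive F T X \<and> (\<forall>t\<in>{0..T}. AE \<omega> in M.
          X t \<omega> = real_cond_exp M (F t) (\<lambda>\<omega>. f t x (\<lambda>v. Y v \<omega>) y z \<psi>) \<omega>)))"

definition MS_growth :: "('k::finite \<Rightarrow> real measure) \<Rightarrow> real \<Rightarrow> real \<Rightarrow> real \<Rightarrow> real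
    \<Rightarrow> (real \<Rightarrow> real) \<Rightarrow> ('n::finite, 'd::finite, 'k) driver \<Rightarrow> bool" where
  "MS_growth \<nu> T \<beta> \<delta> \<gamma> l f \<longleftrightarrow> (\<forall>x q y z \<psi>. cadlag_on T q \<longrightarrow> \<psi> \<in> L2nu \<nu> \<longrightarrow>
      (AE t in lborel. t \<in> {0..T} \<longrightarrow>
        ereal (- l t - \<delta> * supq t T q - \<beta> * \<bar>y\<bar> - \<gamma> / 2 * (norm z)\<^sup>2)
            - Jint \<gamma> \<nu> (\<lambda>i e. - \<psi> i e) \<le> ereal (f t x q y z \<psi>)
        \<and> ereal (f t x q y z \<psi>) \<le>
            ereal (l t + \<delta> * supq t T q + \<beta> * \<bar>y\<bar> + \<gamma> / 2 * (norm z)\<^sup>2) + Jint \<gamma> \<nu> \<psi>))"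

definition MS_with :: "('k::finite \<Rightarrow> real measure) \<Rightarrow> 'w measure \<Rightarrow> (real \<Rightarrow> 'w measure) \<Rightarrow> real
    \<Rightarrow> real \<Rightarrow> real \<Rightarrow> real \<Rightarrow> (real \<Rightarrow> real) \<Rightarrow> ('n::finite, 'd::finite, 'k) driver \<Rightarrow> (real^'n::finite \<Rightarrow> real) \<Rightarrow> bool" where
  "MS_with \<nu> M F T \<beta> \<delta> \<gamma> l f \<xi> \<longleftrightarrow> MS_meas \<nu> M F T f
      \<and> \<beta> \<ge> 0 \<and> \<delta> \<ge> 0 \<and> \<gamma> > 0 \<and> (\<forall>t\<in>{0..T}. l t > 0)
      \<and> MS_growth \<nu> T \<beta> \<delta> \<gamma> l f
      \<and> bdd_above (range (\<lambda>x. \<bar>\<xi> x\<bar>)) \<and> bdd_above (l ` {0..T})"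

definition MS :: "('k::finite \<Rightarrow> real measure) \<Rightarrow> 'w measure \<Rightarrow> (real \<Rightarrow> 'w measure) \<Rightarrow> real
    \<Rightarrow> ('n::finite, 'd::finite, 'k) driver \<Rightarrow> (real^'n::finite \<Rightarrow> real) \<Rightarrow> bool" where
  "MS \<nu> M F T f \<xi> \<longleftrightarrow> (\<exists>\<beta> \<delta> \<gamma> l. MS_with \<nu> M F T \<beta> \<delta> \<gamma> l f \<xi>)"

definition Lip_cond :: "('k::finite \<Rightarrow> real measure) \<Rightarrow> real \<Rightarrow> (real \<Rightarrow> real) \<Rightarrow> real \<Rightarrow> real
    \<Rightarrow> ('n::finite, 'd::finite, 'k) driver \<Rightarrow> bool" where
  "Lip_cond \<nu> T K \<rho> \<alpha> f \<longleftrightarrow>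
    (\<forall>Mb>0. \<forall>x q q' y y' z z' \<psi> \<psi>'.
      cadlag_on T q \<and> cadlag_on T q' \<and> \<psi> \<in> L2nu \<nu> \<and> \<psi>' \<in> L2nu \<nu>
      \<and> \<bar>y\<bar> \<le> Mb \<and> \<bar>y'\<bar> \<le> Mb \<and> Linfnorm \<nu> \<psi> \<le> ereal Mb \<and> Linfnorm \<nu> \<psi>' \<le> ereal Mb
      \<and> supq 0 T q \<le> Mb \<and> supq 0 T q' \<le> Mb \<longrightarrow>
      (AE t in lborel. t \<in> {0..T} \<longrightarrow>
        \<bar>f t x q y z \<psi> - f t x q' y' z' \<psi>'\<bar>
          \<le> K Mb * (supq t T (\<lambda>v. q v - q' v) + \<bar>y - y'\<bar> + L2norm \<nu> (\<lambda>i e. \<psi> i e - \<psi>' i e))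
            + K Mb * (1 + norm z + norm z' + L2norm \<nu> \<psi> + L2norm \<nu> \<psi>') * norm (z - z')))
  \<and> (\<forall>Mb>0. \<forall>x x' q y z \<psi>.
      cadlag_on T q \<and> \<psi> \<in> L2nu \<nu> \<and> \<bar>y\<bar> \<le> Mb \<and> Linfnorm \<nu> \<psi> \<le> ereal Mb \<and> supq 0 T q \<le> Mb \<longrightarrow>
      (AE t in lborel. t \<in> {0..T} \<longrightarrow>
        \<bar>f t x q y z \<psi> - f t x' q y z \<psi>\<bar>
          \<le> K Mb * (1 + (max (norm x) (norm x')) powr \<rho> + (norm z)\<^sup>2 + (L2norm \<nu> \<psi>)\<^sup>2)
                 * (norm (x - x')) powr \<alpha>))"

definition MLa_with :: "('k::finite \<Rightarrow> real measure) \<Rightarrow> real \<Rightarrow> (real \<Rightarrow> real) \<Rightarrow> real \<Rightarrow> real \<Rightarrow> real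
    \<Rightarrow> ('n::finite, 'd::finite, 'k) driver \<Rightarrow> (real^'n::finite \<Rightarrow> real) \<Rightarrow> bool" where
  "MLa_with \<nu> T K K\<xi> \<rho> \<alpha> f \<xi> \<longleftrightarrow> (\<forall>Mb>0. K Mb > 0) \<and> K\<xi> \<ge> 0 \<and> \<rho> \<ge> 0 \<and> 0 < \<alpha> \<and> \<alpha> \<le> 1
      \<and> Lip_cond \<nu> T K \<rho> \<alpha> f
      \<and> (\<forall>x x'. \<bar>\<xi> x - \<xi> x'\<bar> \<le> K\<xi> * (norm (x - x')) powr \<alpha>)"

definition MLa :: "('k::finite \<Rightarrow> real measure) \<Rightarrow> real \<Rightarrow> ('n::finite, 'd::finite, 'k) driver \<Rightarrow> (real^'n::finite \<Rightarrow> real) \<Rightarrow> bool" where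
  "MLa \<nu> T f \<xi> \<longleftrightarrow> (\<exists>K K\<xi> \<rho> \<alpha>. MLa_with \<nu> T K K\<xi> \<rho> \<alpha> f \<xi>)"

end

theory Submission
  imports Defs
begin

text \<open>The truncation phi_m is 1-Lipschitz and moves every argument towards 0 without changing its
  sign. Since j_gamma is nonnegative and increasing in |u| on each half-line, every bound in (MS)
  and (ML) for f transfers to f_m with the same constants. For fixed m the truncated arguments are
  bounded by m, and once the jumps below 1/m are cut off they are dominated by m^2 |e|, which is
  square integrable for the Levy measures. This makes the growth bound of (MS) a uniform bound on
  f_m and turns the local estimate of (ML) at level M = m into a global Lipschitz estimate.\<close>

lemma abs_phi_le: "\<bar>phi m u\<bar> \<le> \<bar>u\<bar>"
  unfolding phi_def by auto

lemma abs_phi_le_m: "\<bar>phi m u\<bar> \<le> real m"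
  unfolding phi_def by auto

lemma phi_lipschitz: "\<bar>phi m a - phi m b\<bar> \<le> \<bar>a - b\<bar>"
  unfolding phi_def by auto

lemma norm_phiv_le: "norm (phiv m z) \<le> norm z"
  unfolding phiv_def norm_vec_def by (rule L2_set_mono) (auto simp: abs_phi_le)

lemma phiv_lipschitz: "norm (phiv m z - phiv m z') \<le> norm (z - z')"
  unfolding phiv_def norm_vec_def by (rule L2_set_mono) (auto simp: phi_lipschitz)

lemma norm_phiv_le_m: "norm (phiv m (z::real^'d)) \<le> real CARD('d) * real m"
proof -
  have "norm (phiv m z) \<le> (\<Sum>i\<in>UNIV. norm (phiv m z $ i))"
    unfolding norm_vec_def by (rule L2_set_le_sum) auto
  also have "\<dots> \<le> (\<Sum>i\<in>(UNIV::'d set). real m)"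
    by (rule sum_mono) (auto simp: phiv_def abs_phi_le_m)
  finally show ?thesis by simp
qed

lemma jg_derivative: "\<gamma> \<noteq> 0 \<Longrightarrow> DERIV (jg \<gamma>) u :> exp (\<gamma> * u) - 1"
  unfolding jg_def by (auto intro!: derivative_eq_intros simp: field_simps)

lemma jg_mono:
  assumes "\<gamma> > 0" and "(0 \<le> u \<and> u \<le> v) \<or> (v \<le> u \<and> u \<le> 0)"
  shows "jg \<gamma> u \<le> jg \<gamma> v"
  using assms(2)
proof
  assume uv: "0 \<le> u \<and> u \<le> v"
  show ?thesis
  proof (rule DERIV_nonneg_imp_nondecreasing[of u v])
    fix w assume "u \<le> w" "w \<le> v"
    then show "\<exists>y. DERIV (jg \<gamma>) w :> y \<and> 0 \<le> y"
      using uv assms(1) jg_derivative[of \<gamma> w] by auto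
  qed (use uv in auto)
next
  assume vu: "v \<le> u \<and> u \<le> 0"
  show ?thesis
  proof (rule DERIV_nonpos_imp_nonincreasing[of v u])
    fix w assume "v \<le> w" "w \<le> u"
    then have "\<gamma> * w \<le> 0"
      using vu assms(1) by (simp add: mult_nonneg_nonpos)
    then show "\<exists>y. DERIV (jg \<gamma>) w :> y \<and> y \<le> 0"
      using assms(1) jg_derivative[of \<gamma> w] by auto
  qed (use vu in auto)
qed

lemma jg_nonneg: "\<gamma> > 0 \<Longrightarrow> 0 \<le> jg \<gamma> u"
  using jg_mono[of \<gamma> 0 u] by (cases "0 \<le> u") (auto simp: jg_def)

lemma jg_le_of_abs_le_m:
  assumes "\<gamma> > 0" and "\<bar>u\<bar> \<le> real m"
  shows "jg \<gamma> u \<le> jg \<gamma> (real m) + jg \<gamma> (- real m)"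
proof (cases "0 \<le> u")
  case True
  then show ?thesis
    using assms jg_mono[of \<gamma> u "real m"] jg_nonneg[of \<gamma> "- real m"] by auto
next
  case False
  then show ?thesis
    using assms jg_mono[of \<gamma> u "- real m"] jg_nonneg[of \<gamma> "real m"] by auto
qed

lemma cadlag_on_locally_bounded:
  assumes "cadlag_on T q" and t: "t \<in> {0..T}"
  shows "\<exists>U. open U \<and> t \<in> U \<and> bdd_above ((\<lambda>v. \<bar>q v\<bar>) ` (U \<inter> {0..T}))"
proof -
  obtain b1 B1 where b1: "t < b1" "\<forall>v. t < v \<and> v < b1 \<and> v \<le> T \<longrightarrow> \<bar>q v\<bar> \<le> B1"
  proof (cases "t < T")
    case True
    then have "(q \<longlongrightarrow> q t) (at_right t)"
      using assms unfolding cadlag_on_def by auto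
    then have "eventually (\<lambda>v. dist (q v) (q t) < 1) (at_right t)"
      by (rule tendstoD) simp
    then obtain b where "t < b" "\<forall>v>t. v < b \<longrightarrow> dist (q v) (q t) < 1"
      unfolding eventually_at_right_field by auto
    then show thesis
      by (intro that[of b "\<bar>q t\<bar> + 1"]) (auto simp: dist_real_def)
  qed (auto intro: that[of "t + 1" 0])
  obtain b2 B2 where b2: "b2 < t" "\<forall>v. b2 < v \<and> v < t \<and> 0 \<le> v \<longrightarrow> \<bar>q v\<bar> \<le> B2"
  proof (cases "0 < t")
    case True
    with t have "t \<in> {0<..T}" by auto
    then obtain L where "(q \<longlongrightarrow> L) (at_left t)"
      using assms unfolding cadlag_on_def by blast
    then have "eventually (\<lambda>v. dist (q v) L < 1) (at_left t)"
      by (rule tendstoD) simp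
    then obtain b where "b < t" "\<forall>v>b. v < t \<longrightarrow> dist (q v) L < 1"
      unfolding eventually_at_left_field by auto
    then show thesis
      by (intro that[of b "\<bar>L\<bar> + 1"]) (auto simp: dist_real_def)
  qed (auto intro: that[of "t - 1" 0])
  have "\<bar>q v\<bar> \<le> max (max B1 B2) \<bar>q t\<bar>" if "v \<in> {b2<..<b1} \<inter> {0..T}" for v
    using that b1(2) b2(2) by (cases v t rule: linorder_cases) fastforce+
  then have "bdd_above ((\<lambda>v. \<bar>q v\<bar>) ` ({b2<..<b1} \<inter> {0..T}))"
    by (intro bdd_aboveI2) auto
  then show ?thesis
    using b1(1) b2(1) by (intro exI[of _ "{b2<..<b1}"]) auto
qed

lemma cadlag_on_bounded:
  assumes "cadlag_on T q"
  shows "bdd_above ((\<lambda>v. \<bar>q v\<bar>) ` {0..T})"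
proof -
  obtain U where U: "\<forall>t\<in>{0..T}. open (U t) \<and> t \<in> U t \<and> bdd_above ((\<lambda>v. \<bar>q v\<bar>) ` (U t \<inter> {0..T}))"
    using cadlag_on_locally_bounded[OF assms] by metis
  obtain C where C: "C \<subseteq> {0..T}" "finite C" "{0..T} \<subseteq> (\<Union>c\<in>C. U c)"
    by (rule compactE_image[of "{0..T}" "{0..T}" U]) (use U in auto)
  have "(\<lambda>v. \<bar>q v\<bar>) ` {0..T} \<subseteq> (\<Union>c\<in>C. (\<lambda>v. \<bar>q v\<bar>) ` (U c \<inter> {0..T}))"
    using C(3) by blast
  moreover have "bdd_above (\<Union>c\<in>C. (\<lambda>v. \<bar>q v\<bar>) ` (U c \<inter> {0..T}))"
    using C U by auto
  ultimately show ?thesis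
    by (rule bdd_above_mono[rotated])
qed

lemma cadlag_on_phi: "cadlag_on T q \<Longrightarrow> cadlag_on T (\<lambda>v. phi m (q v))"
  unfolding cadlag_on_def phi_def by (fast intro: tendsto_max tendsto_min tendsto_const)

lemma supq_mono:
  assumes "bdd_above ((\<lambda>v. \<bar>g v\<bar>) ` {t..T})" and "t \<le> T"
    and "\<And>v. v \<in> {t..T} \<Longrightarrow> \<bar>h v\<bar> \<le> \<bar>g v\<bar>"
  shows "supq t T h \<le> supq t T g"
  unfolding supq_def
proof (rule cSUP_mono)
  show "\<exists>u\<in>{t..T}. \<bar>h v\<bar> \<le> \<bar>g u\<bar>" if "v \<in> {t..T}" for v
    using that assms(3) by blast
qed (use assms in auto)

lemma supq_le: "t \<le> T \<Longrightarrow> (\<And>v. v \<in> {t..T} \<Longrightarrow> \<bar>h v\<bar> \<le> c) \<Longrightarrow> supq t T h \<le> c"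
  unfolding supq_def by (intro cSUP_least) auto

lemma supq_phi_le:
  assumes "cadlag_on T q" and "0 \<le> t" "t \<le> T"
  shows "supq t T (\<lambda>v. phi m (q v)) \<le> supq t T q"
  using assms by (intro supq_mono bdd_above_mono[OF cadlag_on_bounded]) (auto simp: abs_phi_le)

lemma supq_phi_le_m: "t \<le> T \<Longrightarrow> supq t T (\<lambda>v. phi m (q v)) \<le> real m"
  by (rule supq_le) (auto simp: abs_phi_le_m)

lemma cadlag_on_diff_bounded:
  assumes "cadlag_on T q" and "cadlag_on T q'" and "0 \<le> t"
  shows "bdd_above ((\<lambda>v. \<bar>q v - q' v\<bar>) ` {t..T})"
proof -
  obtain A B where AB: "\<forall>v\<in>{0..T}. \<bar>q v\<bar> \<le> A" "\<forall>v\<in>{0..T}. \<bar>q' v\<bar> \<le> B"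
    using cadlag_on_bounded[OF assms(1)] cadlag_on_bounded[OF assms(2)] by (auto simp: bdd_above_def)
  have "\<bar>q v - q' v\<bar> \<le> A + B" if "v \<in> {t..T}" for v
  proof -
    have "\<bar>q v\<bar> \<le> A" "\<bar>q' v\<bar> \<le> B"
      using AB that assms(3) by auto
    then show ?thesis
      by linarith
  qed
  then show ?thesis
    by (intro bdd_aboveI2) auto
qed

lemma supq_phi_diff_le:
  assumes "cadlag_on T q" and "cadlag_on T q'" and "0 \<le> t" "t \<le> T"
  shows "supq t T (\<lambda>v. phi m (q v) - phi m (q' v)) \<le> supq t T (\<lambda>v. q v - q' v)"
  using assms by (intro supq_mono cadlag_on_diff_bounded) (auto simp: phi_lipschitz)

lemma supq_diff_nonneg:
  assumes "cadlag_on T q" and "cadlag_on T q'" and "0 \<le> t" "t \<le> T"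
  shows "0 \<le> supq t T (\<lambda>v. q v - q' v)"
  unfolding supq_def using assms cadlag_on_diff_bounded[OF assms(1-3)]
  by (intro cSUP_upper2[where x = t]) auto

abbreviation trunc_jumps :: "nat \<Rightarrow> ('k \<Rightarrow> real \<Rightarrow> real) \<Rightarrow> ('k \<Rightarrow> real \<Rightarrow> real)" where
  "trunc_jumps m \<psi> \<equiv> (\<lambda>i e. phi m (zeta_trunc m \<psi> i e))"

lemma trunc_jumps_between:
  "(0 \<le> trunc_jumps m \<psi> i e \<and> trunc_jumps m \<psi> i e \<le> \<psi> i e)
    \<or> (\<psi> i e \<le> trunc_jumps m \<psi> i e \<and> trunc_jumps m \<psi> i e \<le> 0)"
  unfolding zeta_trunc_def phi_def by auto

lemma jg_trunc_jumps_le_jg: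
  assumes "\<gamma> > 0"
  shows "jg \<gamma> (trunc_jumps m \<psi> i e) \<le> jg \<gamma> (\<psi> i e)"
    and "jg \<gamma> (- trunc_jumps m \<psi> i e) \<le> jg \<gamma> (- \<psi> i e)"
  using trunc_jumps_between[of m \<psi> i e] jg_mono[OF assms, of "trunc_jumps m \<psi> i e" "\<psi> i e"]
    jg_mono[OF assms, of "- trunc_jumps m \<psi> i e" "- \<psi> i e"] by auto

lemma abs_trunc_jumps_le: "\<bar>trunc_jumps m \<psi> i e\<bar> \<le> \<bar>\<psi> i e\<bar>"
  using trunc_jumps_between[of m \<psi> i e] by auto

lemma trunc_jumps_lipschitz: "\<bar>trunc_jumps m \<psi> i e - trunc_jumps m \<psi>' i e\<bar> \<le> \<bar>\<psi> i e - \<psi>' i e\<bar>"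
  unfolding zeta_trunc_def using phi_lipschitz by (auto simp: phi_def)

lemma trunc_jumps_nonzero_imp: "trunc_jumps m \<psi> i e \<noteq> 0 \<Longrightarrow> 1 \<le> real m * \<bar>e\<bar>"
  unfolding zeta_trunc_def phi_def by (auto simp: divide_le_eq mult.commute split: if_splits)

text \<open>Cutting off the jumps below 1/m is what dominates the truncated integrand by a multiple
  of e, which is square integrable for a Levy measure.\<close>
lemma abs_trunc_jumps_le_jump: "\<bar>trunc_jumps m \<psi> i e\<bar> \<le> real m ^ 2 * \<bar>e\<bar>"
proof (cases "trunc_jumps m \<psi> i e = 0")
  case False
  then have "real m * 1 \<le> real m * (real m * \<bar>e\<bar>)"
    using trunc_jumps_nonzero_imp by (intro mult_left_mono) auto
  then show ?thesis
    using abs_phi_le_m[of m] order_trans by (fastforce simp: power2_eq_square mult.assoc)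
qed simp

lemma jg_trunc_jumps_le_square:
  assumes "\<gamma> > 0"
  shows "jg \<gamma> (trunc_jumps m \<psi> i e) \<le> (jg \<gamma> (real m) + jg \<gamma> (- real m)) * real m ^ 2 * e\<^sup>2"
    and "jg \<gamma> (- trunc_jumps m \<psi> i e) \<le> (jg \<gamma> (real m) + jg \<gamma> (- real m)) * real m ^ 2 * e\<^sup>2"
proof -
  have C: "0 \<le> jg \<gamma> (real m) + jg \<gamma> (- real m)"
    using jg_nonneg[OF assms] by (simp add: add_nonneg_nonneg)
  have "jg \<gamma> u \<le> (jg \<gamma> (real m) + jg \<gamma> (- real m)) * real m ^ 2 * e\<^sup>2"
    if u: "\<bar>u\<bar> \<le> \<bar>trunc_jumps m \<psi> i e\<bar>" for u
  proof (cases "u = 0")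
    case True
    then show ?thesis
      using C by (simp add: jg_def)
  next
    case False
    then have "1 \<le> (real m * \<bar>e\<bar>) ^ 2"
      using u by (intro one_le_power trunc_jumps_nonzero_imp[of m \<psi> i]) auto
    then have "jg \<gamma> (real m) + jg \<gamma> (- real m) \<le> (jg \<gamma> (real m) + jg \<gamma> (- real m)) * (real m ^ 2 * e\<^sup>2)"
      using C mult_left_mono[of 1 "real m ^ 2 * e\<^sup>2"] by (simp add: power_mult_distrib)
    moreover have "\<bar>u\<bar> \<le> real m"
      using u abs_phi_le_m order_trans by blast
    ultimately show ?thesis
      using jg_le_of_abs_le_m[OF assms] by (simp add: mult.assoc) (meson order_trans)
  qed
  then show "jg \<gamma> (trunc_jumps m \<psi> i e) \<le> (jg \<gamma> (real m) + jg \<gamma> (- real m)) * real m ^ 2 * e\<^sup>2"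
    and "jg \<gamma> (- trunc_jumps m \<psi> i e) \<le> (jg \<gamma> (real m) + jg \<gamma> (- real m)) * real m ^ 2 * e\<^sup>2"
    by auto
qed

lemma levy_measures_measurable_eq:
  "levy_measures \<nu> \<Longrightarrow> borel_measurable (\<nu> i) = borel_measurable borel"
  unfolding levy_measures_def by (intro measurable_cong_sets) auto

lemma levy_measures_integrable_square:
  assumes "levy_measures \<nu>"
  shows "integrable (\<nu> i) (\<lambda>e. e\<^sup>2)"
proof (rule integrableI_nonneg)
  show "(\<lambda>e. e\<^sup>2) \<in> borel_measurable (\<nu> i)"
    by (simp add: levy_measures_measurable_eq[OF assms])
  show "(\<integral>\<^sup>+ e. ennreal (e\<^sup>2) \<partial>\<nu> i) < \<infinity>"
    using assms unfolding levy_measures_def by auto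
qed auto

lemma L2nu_integrable_square:
  assumes "\<psi> \<in> L2nu \<nu>"
  shows "integrable (\<nu> i) (\<lambda>e. (\<psi> i e)\<^sup>2)"
  using assms unfolding L2nu_def by (intro integrableI_nonneg) (auto intro: borel_measurable_power)

lemma L2nu_integrable_diff_square:
  assumes "\<psi> \<in> L2nu \<nu>" and "\<psi>' \<in> L2nu \<nu>"
  shows "integrable (\<nu> i) (\<lambda>e. (\<psi> i e - \<psi>' i e)\<^sup>2)"
proof (rule Bochner_Integration.integrable_bound)
  show "integrable (\<nu> i) (\<lambda>e. 2 * (\<psi> i e)\<^sup>2 + 2 * (\<psi>' i e)\<^sup>2)"
    using L2nu_integrable_square[OF assms(1)] L2nu_integrable_square[OF assms(2)] by auto
  show "(\<lambda>e. (\<psi> i e - \<psi>' i e)\<^sup>2) \<in> borel_measurable (\<nu> i)"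
    using assms unfolding L2nu_def by (auto intro!: borel_measurable_power borel_measurable_diff)
  have "(a - b)\<^sup>2 \<le> 2 * a\<^sup>2 + 2 * b\<^sup>2" for a b :: real
    using sum_squares_ge_zero[of "a + b" 0] by (simp add: power2_eq_square algebra_simps)
  then show "AE e in \<nu> i. norm ((\<psi> i e - \<psi>' i e)\<^sup>2) \<le> norm (2 * (\<psi> i e)\<^sup>2 + 2 * (\<psi>' i e)\<^sup>2)"
    by simp
qed

lemma trunc_jumps_measurable:
  assumes "levy_measures \<nu>" and "\<psi> \<in> L2nu \<nu>"
  shows "trunc_jumps m \<psi> i \<in> borel_measurable (\<nu> i)"
proof -
  have "\<psi> i \<in> borel_measurable borel"
    using assms levy_measures_measurable_eq[OF assms(1)] unfolding L2nu_def by auto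
  then have "trunc_jumps m \<psi> i \<in> borel_measurable borel"
    unfolding phi_def zeta_trunc_def by measurable
  then show ?thesis
    by (simp add: levy_measures_measurable_eq[OF assms(1)])
qed

lemma trunc_jumps_L2nu:
  assumes "levy_measures \<nu>" and "\<psi> \<in> L2nu \<nu>"
  shows "trunc_jumps m \<psi> \<in> L2nu \<nu>"
  unfolding L2nu_def
proof (intro CollectI allI conjI)
  fix i
  show "trunc_jumps m \<psi> i \<in> borel_measurable (\<nu> i)"
    by (rule trunc_jumps_measurable[OF assms])
  have "(\<integral>\<^sup>+ e. ennreal ((trunc_jumps m \<psi> i e)\<^sup>2) \<partial>\<nu> i) \<le> (\<integral>\<^sup>+ e. ennreal ((\<psi> i e)\<^sup>2) \<partial>\<nu> i)"
    by (intro nn_integral_mono ennreal_leI) (metis abs_le_square_iff abs_trunc_jumps_le)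
  also have "\<dots> < \<infinity>"
    using assms(2) unfolding L2nu_def by auto
  finally show "(\<integral>\<^sup>+ e. ennreal ((trunc_jumps m \<psi> i e)\<^sup>2) \<partial>\<nu> i) < \<infinity>" .
qed

lemma Linfnorm_trunc_jumps_le:
  assumes "levy_measures \<nu>" and "\<psi> \<in> L2nu \<nu>"
  shows "Linfnorm \<nu> (trunc_jumps m \<psi>) \<le> Linfnorm \<nu> \<psi>"
  unfolding Linfnorm_def
  using trunc_jumps_measurable[OF assms] abs_trunc_jumps_le
  by (intro SUP_mono' esssup_mono) auto

lemma Linfnorm_trunc_jumps_le_m:
  assumes "levy_measures \<nu>" and "\<psi> \<in> L2nu \<nu>"
  shows "Linfnorm \<nu> (trunc_jumps m \<psi>) \<le> ereal (real m)"
  unfolding Linfnorm_def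
  using trunc_jumps_measurable[OF assms] abs_phi_le_m
  by (intro SUP_least esssup_I) auto

lemma L2norm_nonneg: "0 \<le> L2norm \<nu> \<psi>"
  unfolding L2norm_def by (intro real_sqrt_ge_zero sum_nonneg) simp

lemma L2norm_mono:
  assumes "\<And>i e. \<bar>g i e\<bar> \<le> \<bar>h i e\<bar>" and "\<And>i. integrable (\<nu> i) (\<lambda>e. (h i e)\<^sup>2)"
  shows "L2norm \<nu> g \<le> L2norm \<nu> h"
  unfolding L2norm_def
proof (intro real_sqrt_le_mono sum_mono)
  fix i
  show "(\<integral>e. (g i e)\<^sup>2 \<partial>\<nu> i) \<le> (\<integral>e. (h i e)\<^sup>2 \<partial>\<nu> i)"
  proof (cases "integrable (\<nu> i) (\<lambda>e. (g i e)\<^sup>2)")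
    case True
    then show ?thesis
      using assms by (intro integral_mono) (auto simp: abs_le_square_iff)
  qed (simp add: not_integrable_integral_eq)
qed

lemma L2norm_trunc_jumps_le:
  "\<psi> \<in> L2nu \<nu> \<Longrightarrow> L2norm \<nu> (trunc_jumps m \<psi>) \<le> L2norm \<nu> \<psi>"
  by (rule L2norm_mono) (simp_all add: abs_trunc_jumps_le L2nu_integrable_square)

lemma L2norm_trunc_jumps_diff_le:
  "\<psi> \<in> L2nu \<nu> \<Longrightarrow> \<psi>' \<in> L2nu \<nu> \<Longrightarrow>
    L2norm \<nu> (\<lambda>i e. trunc_jumps m \<psi> i e - trunc_jumps m \<psi>' i e) \<le> L2norm \<nu> (\<lambda>i e. \<psi> i e - \<psi>' i e)"
  by (rule L2norm_mono) (simp_all add: trunc_jumps_lipschitz L2nu_integrable_diff_square)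

lemma L2norm_trunc_jumps_le_m:
  assumes "levy_measures \<nu>"
  shows "L2norm \<nu> (trunc_jumps m \<psi>) \<le> L2norm \<nu> (\<lambda>i e. real m ^ 2 * e)"
  by (rule L2norm_mono)
    (simp_all add: abs_trunc_jumps_le_jump abs_mult power_mult_distrib levy_measures_integrable_square[OF assms])

lemma Jint_mono:
  assumes "\<And>i e. jg \<gamma> (g i e) \<le> jg \<gamma> (h i e)"
  shows "Jint \<gamma> \<nu> g \<le> Jint \<gamma> \<nu> h"
  unfolding Jint_def
  using assms by (intro sum_mono) (simp add: less_eq_ennreal.rep_eq[symmetric] nn_integral_mono ennreal_leI)

lemma Jint_le_square:
  assumes "levy_measures \<nu>" and "\<And>i e. jg \<gamma> (g i e) \<le> c * e\<^sup>2" and "0 \<le> c"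
  shows "Jint \<gamma> \<nu> g \<le> ereal (\<Sum>i\<in>UNIV. c * (\<integral>e. e\<^sup>2 \<partial>\<nu> i))"
proof -
  have "enn2ereal (\<integral>\<^sup>+ e. ennreal (jg \<gamma> (g i e)) \<partial>\<nu> i) \<le> ereal (c * (\<integral>e. e\<^sup>2 \<partial>\<nu> i))" for i
  proof -
    have "(\<integral>\<^sup>+ e. ennreal (jg \<gamma> (g i e)) \<partial>\<nu> i) \<le> (\<integral>\<^sup>+ e. ennreal (c * e\<^sup>2) \<partial>\<nu> i)"
      by (intro nn_integral_mono ennreal_leI assms)
    also have "\<dots> = ennreal (c * (\<integral>e. e\<^sup>2 \<partial>\<nu> i))"
      using levy_measures_integrable_square[OF assms(1)] assms(3) by (subst nn_integral_eq_integral) auto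
    finally show ?thesis
      using assms(3) by (metis enn2ereal_ennreal less_eq_ennreal.rep_eq integral_nonneg_AE
          AE_I2 zero_le_power2 mult_nonneg_nonneg)
  qed
  then show ?thesis
    unfolding Jint_def sum_ereal[symmetric] by (rule sum_mono)
qed

lemma Jint_trunc_jumps_le:
  fixes m :: nat
  assumes "levy_measures \<nu>" and "\<gamma> > 0"
  defines "C \<equiv> (\<Sum>i\<in>UNIV. (jg \<gamma> (real m) + jg \<gamma> (- real m)) * real m ^ 2 * (\<integral>e. e\<^sup>2 \<partial>\<nu> i))"
  shows "Jint \<gamma> \<nu> (trunc_jumps m \<psi>) \<le> ereal C"
    and "Jint \<gamma> \<nu> (\<lambda>i e. - trunc_jumps m \<psi> i e) \<le> ereal C"
proof -
  have "0 \<le> (jg \<gamma> (real m) + jg \<gamma> (- real m)) * real m ^ 2"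
    using jg_nonneg[OF assms(2)] by (simp add: add_nonneg_nonneg)
  then show "Jint \<gamma> \<nu> (trunc_jumps m \<psi>) \<le> ereal C"
    and "Jint \<gamma> \<nu> (\<lambda>i e. - trunc_jumps m \<psi> i e) \<le> ereal C"
    unfolding C_def using jg_trunc_jumps_le_square[OF assms(2)]
    by (auto intro!: Jint_le_square[OF assms(1)])
qed

lemma fm_apply:
  "fm f m t x q y z \<psi> = f t x (\<lambda>v. phi m (q v)) (phi m y) (phiv m z) (trunc_jumps m \<psi>)"
  unfolding fm_def ..

lemma cadlag_adapted_phi:
  "cadlag_adapted M F T Y \<Longrightarrow> cadlag_adapted M F T (\<lambda>v \<omega>. phi m (Y v \<omega>))"
  unfolding cadlag_adapted_def phi_def by (auto intro: cadlag_on_phi[unfolded phi_def])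

lemma MS_meas_fm:
  assumes "levy_measures \<nu>" and "MS_meas \<nu> M F T f"
  shows "MS_meas \<nu> M F T (fm f m)"
  unfolding MS_meas_def fm_apply
  using assms(2)[unfolded MS_meas_def] trunc_jumps_L2nu[OF assms(1)] cadlag_adapted_phi
  by blast

definition growth_terms :: "real \<Rightarrow> real \<Rightarrow> real \<Rightarrow> real \<Rightarrow> real \<Rightarrow> (real \<Rightarrow> real) \<Rightarrow> real \<Rightarrow> real^'d \<Rightarrow> real"
  where "growth_terms \<beta> \<delta> \<gamma> T t q y z = \<delta> * supq t T q + \<beta> * \<bar>y\<bar> + \<gamma> / 2 * (norm z)\<^sup>2"

lemma growth_terms_phi_le:
  assumes "cadlag_on T q" and "t \<in> {0..T}" and "0 \<le> \<beta>" "0 \<le> \<delta>" "0 \<le> \<gamma>"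
  shows "growth_terms \<beta> \<delta> \<gamma> T t (\<lambda>v. phi m (q v)) (phi m y) (phiv m z) \<le> growth_terms \<beta> \<delta> \<gamma> T t q y z"
proof -
  have "(norm (phiv m z))\<^sup>2 \<le> (norm z)\<^sup>2"
    by (intro power_mono norm_phiv_le) auto
  then show ?thesis
    unfolding growth_terms_def using assms supq_phi_le[OF assms(1), of t m]
    by (intro add_mono mult_left_mono abs_phi_le) auto
qed

lemma growth_terms_phi_le_m:
  fixes z :: "real^'d"
  assumes "t \<le> T" and "0 \<le> \<beta>" "0 \<le> \<delta>" "0 \<le> \<gamma>"
  shows "growth_terms \<beta> \<delta> \<gamma> T t (\<lambda>v. phi m (q v)) (phi m y) (phiv m z)
    \<le> \<delta> * real m + \<beta> * real m + \<gamma> / 2 * (real CARD('d) * real m)\<^sup>2"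
proof -
  have "(norm (phiv m z))\<^sup>2 \<le> (real CARD('d) * real m)\<^sup>2"
    by (intro power_mono norm_phiv_le_m) auto
  then show ?thesis
    unfolding growth_terms_def using assms supq_phi_le_m[OF assms(1), of m q]
    by (intro add_mono mult_left_mono abs_phi_le_m) auto
qed

lemma fm_growth_bounds:
  fixes f :: "('n::finite, 'd::finite, 'k::finite) driver"
  assumes "levy_measures \<nu>" and growth: "MS_growth \<nu> T \<beta> \<delta> \<gamma> l f"
    and "cadlag_on T q" and "\<psi> \<in> L2nu \<nu>"
  shows "AE t in lborel. t \<in> {0..T} \<longrightarrow>
    ereal (- (l t + growth_terms \<beta> \<delta> \<gamma> T t (\<lambda>v. phi m (q v)) (phi m y) (phiv m z)))
        - Jint \<gamma> \<nu> (\<lambda>i e. - trunc_jumps m \<psi> i e) \<le> ereal (fm f m t x q y z \<psi>)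
    \<and> ereal (fm f m t x q y z \<psi>)
      \<le> ereal (l t + growth_terms \<beta> \<delta> \<gamma> T t (\<lambda>v. phi m (q v)) (phi m y) (phiv m z))
        + Jint \<gamma> \<nu> (trunc_jumps m \<psi>)"
  using growth[unfolded MS_growth_def, rule_format, where x = x and y = "phi m y" and z = "phiv m z",
      OF cadlag_on_phi[OF assms(3)] trunc_jumps_L2nu[OF assms(1,4)]]
  unfolding fm_apply growth_terms_def by (simp add: algebra_simps)

lemma MS_growth_fm:
  fixes f :: "('n::finite, 'd::finite, 'k::finite) driver"
  assumes "levy_measures \<nu>" and "0 \<le> \<beta>" "0 \<le> \<delta>" "0 < \<gamma>"
    and growth: "MS_growth \<nu> T \<beta> \<delta> \<gamma> l f"
  shows "MS_growth \<nu> T \<beta> \<delta> \<gamma> l (fm f m)"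
  unfolding MS_growth_def
proof (intro allI impI)
  fix x q y \<psi> and z :: "real^'d"
  assume q: "cadlag_on T q" and \<psi>: "\<psi> \<in> L2nu \<nu>"
  define G where "G t = growth_terms \<beta> \<delta> \<gamma> T t q y z" for t
  define G' where "G' t = growth_terms \<beta> \<delta> \<gamma> T t (\<lambda>v. phi m (q v)) (phi m y) (phiv m z)" for t
  have J: "Jint \<gamma> \<nu> (trunc_jumps m \<psi>) \<le> Jint \<gamma> \<nu> \<psi>"
    "Jint \<gamma> \<nu> (\<lambda>i e. - trunc_jumps m \<psi> i e) \<le> Jint \<gamma> \<nu> (\<lambda>i e. - \<psi> i e)"
    using jg_trunc_jumps_le_jg[OF assms(4)] by (auto intro!: Jint_mono)
  have "G' t \<le> G t" if "t \<in> {0..T}" for t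
    unfolding G_def G'_def using growth_terms_phi_le[OF q that assms(2,3) less_imp_le[OF assms(4)]] .
  then have "ereal (- (l t + G t)) - Jint \<gamma> \<nu> (\<lambda>i e. - \<psi> i e)
        \<le> ereal (- (l t + G' t)) - Jint \<gamma> \<nu> (\<lambda>i e. - trunc_jumps m \<psi> i e)"
    and "ereal (l t + G' t) + Jint \<gamma> \<nu> (trunc_jumps m \<psi>) \<le> ereal (l t + G t) + Jint \<gamma> \<nu> \<psi>"
    if "t \<in> {0..T}" for t
    using that J by (auto intro!: ereal_minus_mono add_mono)
  then have "AE t in lborel. t \<in> {0..T} \<longrightarrow>
      ereal (- (l t + G t)) - Jint \<gamma> \<nu> (\<lambda>i e. - \<psi> i e) \<le> ereal (fm f m t x q y z \<psi>)
      \<and> ereal (fm f m t x q y z \<psi>) \<le> ereal (l t + G t) + Jint \<gamma> \<nu> \<psi>"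
    using fm_growth_bounds[OF assms(1) growth q \<psi>, of m y z x] unfolding G'_def[symmetric]
    by (elim eventually_mono) (meson order_trans)
  then show "AE t in lborel. t \<in> {0..T} \<longrightarrow>
      ereal (- l t - \<delta> * supq t T q - \<beta> * \<bar>y\<bar> - \<gamma> / 2 * (norm z)\<^sup>2) - Jint \<gamma> \<nu> (\<lambda>i e. - \<psi> i e)
        \<le> ereal (fm f m t x q y z \<psi>)
      \<and> ereal (fm f m t x q y z \<psi>)
        \<le> ereal (l t + \<delta> * supq t T q + \<beta> * \<bar>y\<bar> + \<gamma> / 2 * (norm z)\<^sup>2) + Jint \<gamma> \<nu> \<psi>"
    unfolding G_def growth_terms_def by (simp add: algebra_simps)
qed

lemma MS_with_fm:
  assumes "levy_measures \<nu>" and "MS_with \<nu> M F T \<beta> \<delta> \<gamma> l f \<xi>"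
  shows "MS_with \<nu> M F T \<beta> \<delta> \<gamma> l (fm f m) \<xi>"
  using assms(2) MS_meas_fm[OF assms(1)] MS_growth_fm[OF assms(1)] unfolding MS_with_def by auto

lemma truncated_args_le:
  assumes "levy_measures \<nu>" and "0 \<le> T" and "cadlag_on T q" and "\<psi> \<in> L2nu \<nu>"
    and "\<bar>y\<bar> \<le> Mb" and "Linfnorm \<nu> \<psi> \<le> ereal Mb" and "supq 0 T q \<le> Mb"
  shows "\<bar>phi m y\<bar> \<le> Mb" and "Linfnorm \<nu> (trunc_jumps m \<psi>) \<le> ereal Mb"
    and "supq 0 T (\<lambda>v. phi m (q v)) \<le> Mb"
  using assms abs_phi_le[of m y] Linfnorm_trunc_jumps_le[OF assms(1,4), of m]
    supq_phi_le[OF assms(3), of 0 m] by auto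

lemma fm_diff_le:
  fixes f :: "('n::finite, 'd::finite, 'k::finite) driver"
  assumes "levy_measures \<nu>" and "0 \<le> T" and Lip: "Lip_cond \<nu> T K \<rho> \<alpha> f" and "0 < Mb" "0 \<le> K Mb"
    and q: "cadlag_on T q" "cadlag_on T q'" and \<psi>: "\<psi> \<in> L2nu \<nu>" "\<psi>' \<in> L2nu \<nu>"
    and "\<bar>phi m y\<bar> \<le> Mb" "\<bar>phi m y'\<bar> \<le> Mb"
    and "Linfnorm \<nu> (trunc_jumps m \<psi>) \<le> ereal Mb" "Linfnorm \<nu> (trunc_jumps m \<psi>') \<le> ereal Mb"
    and "supq 0 T (\<lambda>v. phi m (q v)) \<le> Mb" "supq 0 T (\<lambda>v. phi m (q' v)) \<le> Mb"
  shows "AE t in lborel. t \<in> {0..T} \<longrightarrow>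
    \<bar>fm f m t x q y z \<psi> - fm f m t x q' y' z' \<psi>'\<bar>
      \<le> K Mb * (supq t T (\<lambda>v. q v - q' v) + \<bar>y - y'\<bar> + L2norm \<nu> (\<lambda>i e. \<psi> i e - \<psi>' i e))
        + K Mb * (1 + norm (phiv m z) + norm (phiv m z') + L2norm \<nu> (trunc_jumps m \<psi>)
            + L2norm \<nu> (trunc_jumps m \<psi>')) * norm (z - z')"
proof -
  have "AE t in lborel. t \<in> {0..T} \<longrightarrow>
    \<bar>fm f m t x q y z \<psi> - fm f m t x q' y' z' \<psi>'\<bar>
      \<le> K Mb * (supq t T (\<lambda>v. phi m (q v) - phi m (q' v)) + \<bar>phi m y - phi m y'\<bar>
            + L2norm \<nu> (\<lambda>i e. trunc_jumps m \<psi> i e - trunc_jumps m \<psi>' i e))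
        + K Mb * (1 + norm (phiv m z) + norm (phiv m z') + L2norm \<nu> (trunc_jumps m \<psi>)
            + L2norm \<nu> (trunc_jumps m \<psi>')) * norm (phiv m z - phiv m z')"
    unfolding fm_apply
    by (rule Lip[unfolded Lip_cond_def, THEN conjunct1, rule_format])
      (use assms in \<open>auto intro: cadlag_on_phi trunc_jumps_L2nu\<close>)
  moreover have "0 \<le> K Mb * (1 + norm (phiv m z) + norm (phiv m z') + L2norm \<nu> (trunc_jumps m \<psi>)
      + L2norm \<nu> (trunc_jumps m \<psi>'))"
    using assms(5) L2norm_nonneg[of \<nu>] by simp
  ultimately show ?thesis
    using assms(5) supq_phi_diff_le[OF q] phi_lipschitz[of m y y'] L2norm_trunc_jumps_diff_le[OF \<psi>, of m]
      phiv_lipschitz[of m z z']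
    by (elim eventually_mono) (auto intro!: add_mono mult_left_mono elim!: order_trans)
qed

lemma fm_holder_x:
  fixes f :: "('n::finite, 'd::finite, 'k::finite) driver"
  assumes "levy_measures \<nu>" and "0 \<le> T" and Lip: "Lip_cond \<nu> T K \<rho> \<alpha> f" and "0 < Mb" "0 \<le> K Mb"
    and q: "cadlag_on T q" and \<psi>: "\<psi> \<in> L2nu \<nu>"
    and "\<bar>y\<bar> \<le> Mb" "Linfnorm \<nu> \<psi> \<le> ereal Mb" "supq 0 T q \<le> Mb"
  shows "AE t in lborel. t \<in> {0..T} \<longrightarrow>
    \<bar>fm f m t x q y z \<psi> - fm f m t x' q y z \<psi>\<bar>
      \<le> K Mb * (1 + (max (norm x) (norm x')) powr \<rho> + (norm z)\<^sup>2 + (L2norm \<nu> \<psi>)\<^sup>2) * (norm (x - x')) powr \<alpha>"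
proof -
  have "AE t in lborel. t \<in> {0..T} \<longrightarrow>
    \<bar>fm f m t x q y z \<psi> - fm f m t x' q y z \<psi>\<bar>
      \<le> K Mb * (1 + (max (norm x) (norm x')) powr \<rho> + (norm (phiv m z))\<^sup>2
          + (L2norm \<nu> (trunc_jumps m \<psi>))\<^sup>2) * (norm (x - x')) powr \<alpha>"
    unfolding fm_apply
    by (rule Lip[unfolded Lip_cond_def, THEN conjunct2, rule_format])
      (use assms truncated_args_le[OF assms(1,2) q \<psi>] in \<open>auto intro: cadlag_on_phi trunc_jumps_L2nu\<close>)
  moreover have "(norm (phiv m z))\<^sup>2 + (L2norm \<nu> (trunc_jumps m \<psi>))\<^sup>2 \<le> (norm z)\<^sup>2 + (L2norm \<nu> \<psi>)\<^sup>2"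
    using norm_phiv_le L2norm_trunc_jumps_le[OF \<psi>] L2norm_nonneg
    by (intro add_mono power_mono) auto
  then have "K Mb * (1 + (max (norm x) (norm x')) powr \<rho> + (norm (phiv m z))\<^sup>2
          + (L2norm \<nu> (trunc_jumps m \<psi>))\<^sup>2) * (norm (x - x')) powr \<alpha>
      \<le> K Mb * (1 + (max (norm x) (norm x')) powr \<rho> + (norm z)\<^sup>2 + (L2norm \<nu> \<psi>)\<^sup>2) * (norm (x - x')) powr \<alpha>"
    using assms(5) by (intro mult_right_mono mult_left_mono) auto
  ultimately show ?thesis
    by (elim eventually_mono) auto
qed

lemma Lip_cond_fm:
  fixes f :: "('n::finite, 'd::finite, 'k::finite) driver"
  assumes "levy_measures \<nu>" and "0 \<le> T" and K: "\<forall>Mb>0. K Mb > 0" and Lip: "Lip_cond \<nu> T K \<rho> \<alpha> f"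
  shows "Lip_cond \<nu> T K \<rho> \<alpha> (fm f m)"
  unfolding Lip_cond_def
proof (intro conjI allI impI)
  fix Mb x q q' y y' \<psi> \<psi>' and z z' :: "real^'d"
  assume Mb: "0 < Mb" and H: "cadlag_on T q \<and> cadlag_on T q' \<and> \<psi> \<in> L2nu \<nu> \<and> \<psi>' \<in> L2nu \<nu>
      \<and> \<bar>y\<bar> \<le> Mb \<and> \<bar>y'\<bar> \<le> Mb \<and> Linfnorm \<nu> \<psi> \<le> ereal Mb \<and> Linfnorm \<nu> \<psi>' \<le> ereal Mb
      \<and> supq 0 T q \<le> Mb \<and> supq 0 T q' \<le> Mb"
  have K0: "0 \<le> K Mb"
    using K Mb by (simp add: less_imp_le)
  have "AE t in lborel. t \<in> {0..T} \<longrightarrow>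
      \<bar>fm f m t x q y z \<psi> - fm f m t x q' y' z' \<psi>'\<bar>
        \<le> K Mb * (supq t T (\<lambda>v. q v - q' v) + \<bar>y - y'\<bar> + L2norm \<nu> (\<lambda>i e. \<psi> i e - \<psi>' i e))
          + K Mb * (1 + norm (phiv m z) + norm (phiv m z') + L2norm \<nu> (trunc_jumps m \<psi>)
              + L2norm \<nu> (trunc_jumps m \<psi>')) * norm (z - z')"
    using H truncated_args_le[OF assms(1,2), of q \<psi> y Mb m] truncated_args_le[OF assms(1,2), of q' \<psi>' y' Mb m]
    by (intro fm_diff_le[OF assms(1,2) Lip Mb K0]) auto
  moreover have "1 + norm (phiv m z) + norm (phiv m z') + L2norm \<nu> (trunc_jumps m \<psi>) + L2norm \<nu> (trunc_jumps m \<psi>')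
      \<le> 1 + norm z + norm z' + L2norm \<nu> \<psi> + L2norm \<nu> \<psi>'"
    using H norm_phiv_le L2norm_trunc_jumps_le by (intro add_mono) auto
  then have "K Mb * (1 + norm (phiv m z) + norm (phiv m z') + L2norm \<nu> (trunc_jumps m \<psi>)
        + L2norm \<nu> (trunc_jumps m \<psi>')) * norm (z - z')
      \<le> K Mb * (1 + norm z + norm z' + L2norm \<nu> \<psi> + L2norm \<nu> \<psi>') * norm (z - z')"
    using K0 by (intro mult_right_mono mult_left_mono) auto
  ultimately show "AE t in lborel. t \<in> {0..T} \<longrightarrow>
      \<bar>fm f m t x q y z \<psi> - fm f m t x q' y' z' \<psi>'\<bar>
        \<le> K Mb * (supq t T (\<lambda>v. q v - q' v) + \<bar>y - y'\<bar> + L2norm \<nu> (\<lambda>i e. \<psi> i e - \<psi>' i e))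
          + K Mb * (1 + norm z + norm z' + L2norm \<nu> \<psi> + L2norm \<nu> \<psi>') * norm (z - z')"
    by (elim eventually_mono) auto
next
  fix Mb x x' q y \<psi> and z :: "real^'d"
  assume "0 < Mb" and "cadlag_on T q \<and> \<psi> \<in> L2nu \<nu> \<and> \<bar>y\<bar> \<le> Mb \<and> Linfnorm \<nu> \<psi> \<le> ereal Mb \<and> supq 0 T q \<le> Mb"
  then show "AE t in lborel. t \<in> {0..T} \<longrightarrow>
      \<bar>fm f m t x q y z \<psi> - fm f m t x' q y z \<psi>\<bar>
        \<le> K Mb * (1 + (max (norm x) (norm x')) powr \<rho> + (norm z)\<^sup>2 + (L2norm \<nu> \<psi>)\<^sup>2) * (norm (x - x')) powr \<alpha>"
    using K by (intro fm_holder_x[OF assms(1,2) Lip]) (auto simp: less_imp_le)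
qed

lemma MLa_with_fm:
  fixes f :: "('n::finite, 'd::finite, 'k::finite) driver"
  assumes "levy_measures \<nu>" and "0 \<le> T" and "MLa_with \<nu> T K K\<xi> \<rho> \<alpha> f \<xi>"
  shows "MLa_with \<nu> T K K\<xi> \<rho> \<alpha> (fm f m) \<xi>"
  using assms(3) Lip_cond_fm[OF assms(1,2)] unfolding MLa_with_def by blast

lemma abs_le_of_ereal_bounds:
  assumes "J \<le> ereal c" and "J' \<le> ereal c"
    and "ereal (- a) - J \<le> ereal u \<and> ereal u \<le> ereal a + J'"
  shows "\<bar>u\<bar> \<le> a + c"
proof -
  have "ereal (- a) - ereal c \<le> ereal u"
    using assms(1,3) by (meson ereal_minus_mono order.refl order_trans)
  moreover have "ereal u \<le> ereal a + ereal c"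
    using assms(2,3) by (meson add_left_mono order_trans)
  ultimately show ?thesis
    by simp
qed

lemma fm_bounded:
  fixes f :: "('n::finite, 'd::finite, 'k::finite) driver"
  assumes "levy_measures \<nu>" and "MS_with \<nu> M F T \<beta> \<delta> \<gamma> l f \<xi>"
  shows "\<exists>C. \<forall>x q y z \<psi>. cadlag_on T q \<and> \<psi> \<in> L2nu \<nu> \<longrightarrow>
    (AE t in lborel. t \<in> {0..T} \<longrightarrow> \<bar>fm f m t x q y z \<psi>\<bar> \<le> C)"
proof -
  have \<gamma>: "0 < \<gamma>" and \<beta>\<delta>: "0 \<le> \<beta>" "0 \<le> \<delta>" and growth: "MS_growth \<nu> T \<beta> \<delta> \<gamma> l f"
    and "bdd_above (l ` {0..T})"
    using assms(2) unfolding MS_with_def by auto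
  then obtain L where L: "\<forall>t\<in>{0..T}. l t \<le> L"
    by (auto simp: bdd_above_def)
  define C\<^sub>J where "C\<^sub>J = (\<Sum>i\<in>UNIV. (jg \<gamma> (real m) + jg \<gamma> (- real m)) * real m ^ 2 * (\<integral>e. e\<^sup>2 \<partial>\<nu> i))"
  define C where "C = L + \<delta> * real m + \<beta> * real m + \<gamma> / 2 * (real CARD('d) * real m)\<^sup>2 + C\<^sub>J"
  have "AE t in lborel. t \<in> {0..T} \<longrightarrow> \<bar>fm f m t x q y z \<psi>\<bar> \<le> C"
    if q: "cadlag_on T q" and \<psi>: "\<psi> \<in> L2nu \<nu>" for x q y z \<psi>
  proof -
    note fm_le = abs_le_of_ereal_bounds[OF Jint_trunc_jumps_le(2,1)[OF assms(1) \<gamma>, of m \<psi>, folded C\<^sub>J_def]]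
    have "growth_terms \<beta> \<delta> \<gamma> T t (\<lambda>v. phi m (q v)) (phi m y) (phiv m z)
        \<le> \<delta> * real m + \<beta> * real m + \<gamma> / 2 * (real CARD('d) * real m)\<^sup>2" if "t \<in> {0..T}" for t
      using that \<beta>\<delta> \<gamma> by (intro growth_terms_phi_le_m) auto
    moreover note fm_growth_bounds[OF assms(1) growth q \<psi>, of m y z x]
    ultimately show ?thesis
    proof (elim eventually_mono, intro impI, goal_cases)
      case (1 t)
      then have "\<bar>fm f m t x q y z \<psi>\<bar>
          \<le> l t + growth_terms \<beta> \<delta> \<gamma> T t (\<lambda>v. phi m (q v)) (phi m y) (phiv m z) + C\<^sub>J"
        by (intro fm_le) auto
      then show ?case
        using 1 L unfolding C_def by fastforce
    qed
  qed
  then show ?thesis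
    by blast
qed

lemma scaled_sum_le:
  fixes k c a b n :: real
  assumes "0 \<le> k" and "1 \<le> c" and "0 \<le> a" and "b \<le> c" and "0 \<le> n"
  shows "k * a + k * b * n \<le> k * c * (a + n)"
proof -
  have "k * a \<le> k * (c * a)" and "k * b * n \<le> k * (c * n)"
    using assms by (auto intro!: mult_left_mono mult_right_mono simp: mult.assoc mult_le_cancel_right1)
  then show ?thesis
    by (simp add: algebra_simps)
qed

lemma fm_lipschitz:
  fixes f :: "('n::finite, 'd::finite, 'k::finite) driver"
  assumes "levy_measures \<nu>" and "0 \<le> T" and "1 \<le> m" and "MLa_with \<nu> T K K\<xi> \<rho> \<alpha> f \<xi>"
  shows "\<exists>L>0. \<forall>x q q' y y' z z' \<psi> \<psi>'.
    cadlag_on T q \<and> cadlag_on T q' \<and> \<psi> \<in> L2nu \<nu> \<and> \<psi>' \<in> L2nu \<nu> \<longrightarrow>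
    (AE t in lborel. t \<in> {0..T} \<longrightarrow>
      \<bar>fm f m t x q y z \<psi> - fm f m t x q' y' z' \<psi>'\<bar>
        \<le> L * (supq t T (\<lambda>v. q v - q' v) + \<bar>y - y'\<bar> + norm (z - z') + L2norm \<nu> (\<lambda>i e. \<psi> i e - \<psi>' i e)))"
proof -
  have m: "0 < real m"
    using assms(3) by simp
  have K: "0 < K (real m)" and Lip: "Lip_cond \<nu> T K \<rho> \<alpha> f"
    using assms(4) m unfolding MLa_with_def by auto
  define c where "c = 1 + 2 * (real CARD('d) * real m) + 2 * L2norm \<nu> (\<lambda>i e. real m ^ 2 * e)"
  have c: "1 \<le> c"
    unfolding c_def using L2norm_nonneg[of \<nu>] by simp
  have "AE t in lborel. t \<in> {0..T} \<longrightarrow>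
      \<bar>fm f m t x q y z \<psi> - fm f m t x q' y' z' \<psi>'\<bar>
        \<le> K (real m) * c * (supq t T (\<lambda>v. q v - q' v) + \<bar>y - y'\<bar> + norm (z - z')
            + L2norm \<nu> (\<lambda>i e. \<psi> i e - \<psi>' i e))"
    if q: "cadlag_on T q" "cadlag_on T q'" and \<psi>: "\<psi> \<in> L2nu \<nu>" "\<psi>' \<in> L2nu \<nu>"
    for x q q' y y' \<psi> \<psi>' and z z' :: "real^'d"
  proof -
    have factor: "1 + norm (phiv m z) + norm (phiv m z') + L2norm \<nu> (trunc_jumps m \<psi>)
        + L2norm \<nu> (trunc_jumps m \<psi>') \<le> c"
      unfolding c_def using norm_phiv_le_m[of m z] norm_phiv_le_m[of m z']
        L2norm_trunc_jumps_le_m[OF assms(1), of m \<psi>] L2norm_trunc_jumps_le_m[OF assms(1), of m \<psi>']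
      by linarith
    have "AE t in lborel. t \<in> {0..T} \<longrightarrow>
      \<bar>fm f m t x q y z \<psi> - fm f m t x q' y' z' \<psi>'\<bar>
        \<le> K (real m) * (supq t T (\<lambda>v. q v - q' v) + \<bar>y - y'\<bar> + L2norm \<nu> (\<lambda>i e. \<psi> i e - \<psi>' i e))
          + K (real m) * (1 + norm (phiv m z) + norm (phiv m z') + L2norm \<nu> (trunc_jumps m \<psi>)
              + L2norm \<nu> (trunc_jumps m \<psi>')) * norm (z - z')"
      using K q \<psi> abs_phi_le_m Linfnorm_trunc_jumps_le_m[OF assms(1)] supq_phi_le_m[OF assms(2)]
      by (intro fm_diff_le[OF assms(1,2) Lip m]) auto
    then show ?thesis
    proof (elim eventually_mono, intro impI, goal_cases)
      case (1 t)
      have "0 \<le> supq t T (\<lambda>v. q v - q' v) + \<bar>y - y'\<bar> + L2norm \<nu> (\<lambda>i e. \<psi> i e - \<psi>' i e)"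
        using 1 supq_diff_nonneg[OF q] L2norm_nonneg[of \<nu>] by (simp add: add_nonneg_nonneg)
      from scaled_sum_le[OF less_imp_le[OF K] c this factor norm_ge_zero[of "z - z'"]]
      have "K (real m) * (supq t T (\<lambda>v. q v - q' v) + \<bar>y - y'\<bar> + L2norm \<nu> (\<lambda>i e. \<psi> i e - \<psi>' i e))
          + K (real m) * (1 + norm (phiv m z) + norm (phiv m z') + L2norm \<nu> (trunc_jumps m \<psi>)
              + L2norm \<nu> (trunc_jumps m \<psi>')) * norm (z - z')
        \<le> K (real m) * c * (supq t T (\<lambda>v. q v - q' v) + \<bar>y - y'\<bar> + norm (z - z')
            + L2norm \<nu> (\<lambda>i e. \<psi> i e - \<psi>' i e))"
        by (simp add: algebra_simps)
      with 1 show ?case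
        by linarith
    qed
  qed
  moreover have "0 < K (real m) * c"
    using K c by simp
  ultimately show ?thesis
    by blast
qed

theorem lemma4p2:
  fixes T :: real
    and \<nu> :: "'k::finite \<Rightarrow> real measure"
    and M :: "'w measure" and F :: "real \<Rightarrow> 'w measure"
    and f :: "('n::finite, 'd::finite, 'k) driver"
    and \<xi> :: "real^'n \<Rightarrow> real"
  assumes "T > 0"
    and "levy_measures \<nu>"
    and "filtered_space M F"
    and "MS \<nu> M F T f \<xi>"
    and "MLa \<nu> T f \<xi>"
  shows "(\<exists>\<beta> \<delta> \<gamma> l. \<forall>m\<ge>1. MS_with \<nu> M F T \<beta> \<delta> \<gamma> l (fm f m) \<xi>)
    \<and> (\<exists>K K\<xi> \<rho> \<alpha>. \<forall>m\<ge>1. MLa_with \<nu> T K K\<xi> \<rho> \<alpha> (fm f m) \<xi>)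
    \<and> (\<forall>m\<ge>1.
         (\<exists>C. \<forall>x q y z \<psi>. cadlag_on T q \<and> \<psi> \<in> L2nu \<nu> \<longrightarrow>
            (AE t in lborel. t \<in> {0..T} \<longrightarrow> \<bar>fm f m t x q y z \<psi>\<bar> \<le> C))
       \<and> (\<exists>L>0. \<forall>x q q' y y' z z' \<psi> \<psi>'.
            cadlag_on T q \<and> cadlag_on T q' \<and> \<psi> \<in> L2nu \<nu> \<and> \<psi>' \<in> L2nu \<nu> \<longrightarrow>
            (AE t in lborel. t \<in> {0..T} \<longrightarrow>
              \<bar>fm f m t x q y z \<psi> - fm f m t x q' y' z' \<psi>'\<bar>
                \<le> L * (supq t T (\<lambda>v. q v - q' v) + \<bar>y - y'\<bar> + norm (z - z')
                       + L2norm \<nu> (\<lambda>i e. \<psi> i e - \<psi>' i e)))))"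
proof -
  obtain \<beta> \<delta> \<gamma> l where ms: "MS_with \<nu> M F T \<beta> \<delta> \<gamma> l f \<xi>"
    using assms(4) unfolding MS_def by blast
  obtain K K\<xi> \<rho> \<alpha> where mla: "MLa_with \<nu> T K K\<xi> \<rho> \<alpha> f \<xi>"
    using assms(5) unfolding MLa_def by blast
  have T: "0 \<le> T"
    using assms(1) by simp
  show ?thesis
    using MS_with_fm[OF assms(2) ms] MLa_with_fm[OF assms(2) T mla]
      fm_bounded[OF assms(2) ms] fm_lipschitz[OF assms(2) T _ mla] by blast
qed

end
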